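(* Let $L$ be a loop which is torsion-free nilpotent of class $n$ (in the sense defined in the context). Then the left multiplication group $\mathrm{LMlt}(L)$ is a nilpotent group of class at most $n$.
   Context: A loop is a set $L$ with a binary product and a two-sided identity $e$ such that for each $a\in L$ the left and right multiplications $L_a\colon x\mapsto ax$ and $R_a\colon x\mapsto xa$ are bijections of $L$. The left multiplication group $\mathrm{LMlt}(L)$ is the subgroup of the group of all permutations of the set $L$ generated by all $L_a$, $a\in L$. The loop algebra $\mathbb{Q}L$ is the $\mathbb{Q}$-vector space with basis $L$ and the product extended bilinearly from that of $L$ (a non-associative algebra). The augmentation ideal $I$ is the kernel of the linear map $\mathbb{Q}L\to\mathbb{Q}$ sending every element of $L$ to $1$. For $k\ge1$, $I^k$ denotes the ideal of $\mathbb{Q}L$ spanned by all products (with any bracketing) of at least $k$ elements of $I$. The $k$-th dimension subloop is $D_kL=\{g\in L\mid g-1\in I^k\}$ (these are normal subloops). The loop $L$ is called torsion-free nilpotent of class $n$ if $D_{n+1}L$ is trivial while $D_nL$ is not. For a group $G$, $\gamma_1G=G$, $\gamma_{k+1}G=[G,\gamma_kG]$, and $G$ is nilpotent of class at most $n$ if $\gamma_{n+1}G$ is trivial. *)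

theory Defs
  imports "HOL-Algebra.Algebra"
begin

definition is_loop :: "'a set \<Rightarrow> ('a \<Rightarrow> 'a \<Rightarrow> 'a) \<Rightarrow> 'a \<Rightarrow> bool" where
  "is_loop L m e \<longleftrightarrow>
     (\<forall>x\<in>L. \<forall>y\<in>L. m x y \<in> L) \<and> e \<in> L \<and>
     (\<forall>x\<in>L. m e x = x \<and> m x e = x) \<and>
     (\<forall>a\<in>L. bij_betw (\<lambda>x. m a x) L L \<and> bij_betw (\<lambda>x. m x a) L L)"

section \<open>The loop algebra QL: finitely supported rational functions on L\<close>

definition supp :: "('a \<Rightarrow> rat) \<Rightarrow> 'a set" where
  "supp u = {x. u x \<noteq> 0}"

definition loop_alg :: "'a set \<Rightarrow> ('a \<Rightarrow> rat) set" where
  "loop_alg L = {u. supp u \<subseteq> L \<and> finite (supp u)}"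

definition basis :: "'a \<Rightarrow> ('a \<Rightarrow> rat)" where
  "basis g = (\<lambda>x. if x = g then 1 else 0)"

definition alg_mult :: "('a \<Rightarrow> 'a \<Rightarrow> 'a) \<Rightarrow> ('a \<Rightarrow> rat) \<Rightarrow> ('a \<Rightarrow> rat) \<Rightarrow> ('a \<Rightarrow> rat)" where
  "alg_mult m u v = (\<lambda>z. \<Sum>x\<in>supp u. \<Sum>y\<in>supp v. if m x y = z then u x * v y else 0)"

definition aug_ideal :: "'a set \<Rightarrow> ('a \<Rightarrow> rat) set" where
  "aug_ideal L = {u \<in> loop_alg L. (\<Sum>x\<in>supp u. u x) = 0}"

inductive is_prod :: "'a set \<Rightarrow> ('a \<Rightarrow> 'a \<Rightarrow> 'a) \<Rightarrow> nat \<Rightarrow> ('a \<Rightarrow> rat) \<Rightarrow> bool"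
  for L m where
  single: "u \<in> aug_ideal L \<Longrightarrow> is_prod L m 1 u"
| mult: "is_prod L m i u \<Longrightarrow> is_prod L m j v \<Longrightarrow> is_prod L m (i + j) (alg_mult m u v)"

inductive in_aug_pow :: "'a set \<Rightarrow> ('a \<Rightarrow> 'a \<Rightarrow> 'a) \<Rightarrow> nat \<Rightarrow> ('a \<Rightarrow> rat) \<Rightarrow> bool"
  for L m k where
  gen: "is_prod L m j u \<Longrightarrow> k \<le> j \<Longrightarrow> in_aug_pow L m k u"
| zero: "in_aug_pow L m k (\<lambda>_. 0)"
| add: "in_aug_pow L m k u \<Longrightarrow> in_aug_pow L m k v \<Longrightarrow> in_aug_pow L m k (\<lambda>x. u x + v x)"
| smult: "in_aug_pow L m k u \<Longrightarrow> in_aug_pow L m k (\<lambda>x. c * u x)"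
| lmult: "in_aug_pow L m k u \<Longrightarrow> a \<in> loop_alg L \<Longrightarrow> in_aug_pow L m k (alg_mult m a u)"
| rmult: "in_aug_pow L m k u \<Longrightarrow> a \<in> loop_alg L \<Longrightarrow> in_aug_pow L m k (alg_mult m u a)"

definition aug_pow :: "'a set \<Rightarrow> ('a \<Rightarrow> 'a \<Rightarrow> 'a) \<Rightarrow> nat \<Rightarrow> ('a \<Rightarrow> rat) set" where
  "aug_pow L m k = {u. in_aug_pow L m k u}"

definition dim_subloop :: "'a set \<Rightarrow> ('a \<Rightarrow> 'a \<Rightarrow> 'a) \<Rightarrow> 'a \<Rightarrow> nat \<Rightarrow> 'a set" where
  "dim_subloop L m e k = {g \<in> L. (\<lambda>x. basis g x - basis e x) \<in> aug_pow L m k}"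

definition torsion_free_nilpotent_class :: "'a set \<Rightarrow> ('a \<Rightarrow> 'a \<Rightarrow> 'a) \<Rightarrow> 'a \<Rightarrow> nat \<Rightarrow> bool" where
  "torsion_free_nilpotent_class L m e n \<longleftrightarrow>
     1 \<le> n \<and> dim_subloop L m e (Suc n) = {e} \<and> dim_subloop L m e n \<noteq> {e}"

definition LMlt_carrier :: "'a set \<Rightarrow> ('a \<Rightarrow> 'a \<Rightarrow> 'a) \<Rightarrow> ('a \<Rightarrow> 'a) set" where
  "LMlt_carrier L m = generate (BijGroup L) {restrict (\<lambda>x. m a x) L | a. a \<in> L}"

definition LMlt :: "'a set \<Rightarrow> ('a \<Rightarrow> 'a \<Rightarrow> 'a) \<Rightarrow> ('a \<Rightarrow> 'a) monoid" where
  "LMlt L m = (BijGroup L)\<lparr>carrier := LMlt_carrier L m\<rparr>"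

fun lower_central :: "('g, 'b) monoid_scheme \<Rightarrow> nat \<Rightarrow> 'g set" where
  "lower_central G 0 = carrier G"
| "lower_central G (Suc 0) = carrier G"
| "lower_central G (Suc (Suc k)) =
     generate G {x \<otimes>\<^bsub>G\<^esub> y \<otimes>\<^bsub>G\<^esub> inv\<^bsub>G\<^esub> x \<otimes>\<^bsub>G\<^esub> inv\<^bsub>G\<^esub> y | x y.
                   x \<in> carrier G \<and> y \<in> lower_central G (Suc k)}"

definition nilpotent_class_le :: "('g, 'b) monoid_scheme \<Rightarrow> nat \<Rightarrow> bool" where
  "nilpotent_class_le G n \<longleftrightarrow> group G \<and> lower_central G (Suc n) = {\<one>\<^bsub>G\<^esub>}"

end

theory Submission
  imports Defs
begin

text \<open>
  Every permutation of \<open>L\<close> acts linearly on \<open>\<rat>L\<close>. Let \<open>F k\<close> be the span of the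
  iterated differences \<open>(L a\<^sub>k - 1) \<dots> (L a\<^sub>1 - 1) v\<close>; since \<open>(L a - 1) v = (a - e) v\<close>,
  \<open>F k \<subseteq> I\<^sup>k\<close> for \<open>k \<ge> 1\<close>. Call \<open>g\<close> of degree \<open>j\<close> if \<open>(g - 1) (F k) \<subseteq> F (k + j)\<close> for all
  \<open>k\<close>. Each \<open>L a\<close> has degree 1, elements of degree \<open>j \<ge> 1\<close> are closed under products, inverses
  and conjugation, and a commutator of elements of degrees \<open>i\<close> and \<open>j\<close> has degree \<open>i + j\<close>.
  Hence every \<open>g\<close> in the \<open>(n+1)\<close>-st term of the lower central series has degree \<open>n + 1\<close>, and
  so has \<open>c = (L x)\<inverse> g (L x)\<close> for \<open>x \<in> L\<close>. Then \<open>c e - e \<in> F (n + 1) \<subseteq> I\<^sup>n\<^sup>+\<^sup>1\<close>, so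
  \<open>c e \<in> D\<^sub>n\<^sub>+\<^sub>1 L = {e}\<close>, which says exactly \<open>g x = x\<close>.
\<close>

definition perm_lin :: "'a set \<Rightarrow> ('a \<Rightarrow> 'a) \<Rightarrow> ('a \<Rightarrow> rat) \<Rightarrow> ('a \<Rightarrow> rat)" where
  "perm_lin L g v = (\<lambda>z. if z \<in> L then v (inv_into L g z) else 0)"

lemma perm_lin_diff: "perm_lin L g (\<lambda>z. u z - v z) = (\<lambda>z. perm_lin L g u z - perm_lin L g v z)"
  by (auto simp: perm_lin_def)

lemma perm_lin_add: "perm_lin L g (\<lambda>z. u z + v z) = (\<lambda>z. perm_lin L g u z + perm_lin L g v z)"
  by (auto simp: perm_lin_def)

lemma perm_lin_smult: "perm_lin L g (\<lambda>z. c * u z) = (\<lambda>z. c * perm_lin L g u z)"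
  by (auto simp: perm_lin_def)

lemma perm_lin_zero: "perm_lin L g (\<lambda>z. 0) = (\<lambda>z. 0)"
  by (auto simp: perm_lin_def)

lemma inv_into_restrict: "inv_into L (restrict f L) = inv_into L f"
  unfolding inv_into_def by (rule ext) (metis (no_types, lifting) restrict_apply')

lemma Bij_bij_betw: "g \<in> Bij L \<Longrightarrow> bij_betw g L L"
  by (simp add: Bij_def)

lemma perm_lin_compose:
  assumes g: "g \<in> Bij L" and h: "h \<in> Bij L"
  shows "perm_lin L (compose L g h) v = perm_lin L g (perm_lin L h v)"
proof (rule ext)
  fix z
  show "perm_lin L (compose L g h) v z = perm_lin L g (perm_lin L h v) z"
  proof (cases "z \<in> L")
    case True
    have bg: "bij_betw g L L" and bh: "bij_betw h L L" using g h Bij_bij_betw by auto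
    have bgh: "bij_betw (g \<circ> h) L L" using bg bh bij_betw_trans by blast
    have i1: "inv_into L g z \<in> L" using True bg by (metis bij_betw_imp_surj_on inv_into_into)
    hence i2: "inv_into L h (inv_into L g z) \<in> L" using bh by (metis bij_betw_imp_surj_on inv_into_into)
    have "g (h (inv_into L h (inv_into L g z))) = z"
      using i1 True bg bh by (simp add: bij_betw_inv_into_right)
    hence "inv_into L (g \<circ> h) z = inv_into L h (inv_into L g z)"
      using bij_betw_inv_into_left[OF bgh i2] by simp
    thus ?thesis
      using True i1 unfolding perm_lin_def compose_def inv_into_restrict by (simp add: comp_def)
  qed (simp add: perm_lin_def)
qed

lemma perm_lin_id: "supp v \<subseteq> L \<Longrightarrow> perm_lin L (\<lambda>x\<in>L. x) v = v"
proof (rule ext)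
  fix z assume s: "supp v \<subseteq> L"
  show "perm_lin L (\<lambda>x\<in>L. x) v z = v z"
  proof (cases "z \<in> L")
    case True
    have "inv_into L (\<lambda>x. x) z = z"
      using True bij_betw_inv_into_left[OF bij_betw_id[of L] True] by simp
    thus ?thesis using True unfolding perm_lin_def inv_into_restrict by simp
  next
    case False
    hence "v z = 0" using s unfolding supp_def by blast
    thus ?thesis using False unfolding perm_lin_def by simp
  qed
qed

lemma perm_lin_inv_left:
  assumes "g \<in> Bij L" and "supp v \<subseteq> L"
  shows "perm_lin L (\<lambda>x\<in>L. inv_into L g x) (perm_lin L g v) = v"
  by (metis Bij_compose_restrict_eq perm_lin_compose perm_lin_id assms restrict_inv_into_Bij)

lemma perm_lin_inv_right:
  assumes g: "g \<in> Bij L" and s: "supp v \<subseteq> L"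
  shows "perm_lin L g (perm_lin L (\<lambda>x\<in>L. inv_into L g x) v) = v"
proof -
  have "compose L g (\<lambda>x\<in>L. inv_into L g x) = (\<lambda>x\<in>L. x)"
    using Bij_bij_betw[OF g]
    by (intro ext) (auto simp: compose_def bij_betw_inv_into_right)
  thus ?thesis
    by (metis perm_lin_compose perm_lin_id g restrict_inv_into_Bij s)
qed

lemma perm_lin_basis:
  assumes g: "g \<in> Bij L" and x: "x \<in> L"
  shows "perm_lin L g (basis x) = basis (g x)"
proof (rule ext)
  fix z
  have bg: "bij_betw g L L" using g Bij_bij_betw by auto
  have gx: "g x \<in> L" using bg x bij_betwE by blast
  show "perm_lin L g (basis x) z = basis (g x) z"
  proof (cases "z \<in> L")
    case True
    have "(inv_into L g z = x) = (z = g x)"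
      using True bg x by (metis bij_betw_inv_into_left bij_betw_inv_into_right)
    thus ?thesis using True by (simp add: perm_lin_def basis_def)
  qed (use gx in \<open>auto simp: perm_lin_def basis_def\<close>)
qed

lemma supp_perm_lin:
  assumes g: "g \<in> Bij L"
  shows "supp (perm_lin L g v) \<subseteq> g ` supp v"
proof
  fix z assume "z \<in> supp (perm_lin L g v)"
  hence z: "z \<in> L" "v (inv_into L g z) \<noteq> 0"
    by (auto simp: supp_def perm_lin_def split: if_splits)
  have "z = g (inv_into L g z)" using z g Bij_bij_betw by (metis bij_betw_inv_into_right)
  thus "z \<in> g ` supp v" using z by (auto simp: supp_def)
qed

lemma loop_alg_perm_lin:
  assumes g: "g \<in> Bij L" and v: "v \<in> loop_alg L"
  shows "perm_lin L g v \<in> loop_alg L"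
proof -
  have "g ` supp v \<subseteq> L"
    using v g Bij_bij_betw unfolding loop_alg_def
    by (metis bij_betw_imp_surj_on image_mono mem_Collect_eq)
  thus ?thesis using supp_perm_lin[OF g, of v] v unfolding loop_alg_def
    by (auto intro: finite_subset)
qed

lemma loop_alg_zero: "(\<lambda>z. 0) \<in> loop_alg L"
  by (simp add: loop_alg_def supp_def)

lemma loop_alg_add: "u \<in> loop_alg L \<Longrightarrow> v \<in> loop_alg L \<Longrightarrow> (\<lambda>z. u z + v z) \<in> loop_alg L"
proof -
  have "supp (\<lambda>z. u z + v z) \<subseteq> supp u \<union> supp v" by (auto simp: supp_def)
  thus "u \<in> loop_alg L \<Longrightarrow> v \<in> loop_alg L \<Longrightarrow> ?thesis"
    unfolding loop_alg_def by (auto intro: finite_subset)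
qed

lemma loop_alg_smult: "u \<in> loop_alg L \<Longrightarrow> (\<lambda>z. c * u z) \<in> loop_alg L"
  unfolding loop_alg_def supp_def by (auto elim!: finite_subset[rotated])

lemma loop_alg_diff: "u \<in> loop_alg L \<Longrightarrow> v \<in> loop_alg L \<Longrightarrow> (\<lambda>z. u z - v z) \<in> loop_alg L"
proof -
  have "supp (\<lambda>z. u z - v z) \<subseteq> supp u \<union> supp v" by (auto simp: supp_def)
  thus "u \<in> loop_alg L \<Longrightarrow> v \<in> loop_alg L \<Longrightarrow> ?thesis"
    unfolding loop_alg_def by (auto intro: finite_subset)
qed

lemma loop_alg_basis: "x \<in> L \<Longrightarrow> basis x \<in> loop_alg L"
  by (simp add: loop_alg_def supp_def basis_def)

lemma sum_supp_eq:
  assumes "finite A" "supp w \<subseteq> A"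
  shows "(\<Sum>x\<in>supp w. w x) = (\<Sum>x\<in>A. w x)"
  by (rule sum.mono_neutral_left) (use assms in \<open>auto simp: supp_def\<close>)

lemma perm_lin_minus_id_aug_ideal:
  assumes g: "g \<in> Bij L" and v: "v \<in> loop_alg L"
  shows "(\<lambda>z. perm_lin L g v z - v z) \<in> aug_ideal L"
proof -
  let ?w = "\<lambda>z. perm_lin L g v z - v z"
  have fv: "finite (supp v)" and sv: "supp v \<subseteq> L" using v by (auto simp: loop_alg_def)
  define A where "A = supp v \<union> g ` supp v"
  have fA: "finite A" using fv by (simp add: A_def)
  have sw: "supp ?w \<subseteq> A" using supp_perm_lin[OF g, of v] by (auto simp: supp_def A_def)
  have inj: "inj_on g (supp v)" using g sv Bij_bij_betw by (meson bij_betw_def inj_on_subset)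
  have "(\<Sum>x\<in>A. perm_lin L g v x) = (\<Sum>x\<in>g ` supp v. perm_lin L g v x)"
    by (rule sum.mono_neutral_right)
      (use fA supp_perm_lin[OF g, of v] in \<open>auto simp: A_def supp_def\<close>)
  also have "\<dots> = (\<Sum>y\<in>supp v. perm_lin L g v (g y))" by (rule sum.reindex[OF inj, simplified])
  also have "\<dots> = (\<Sum>y\<in>supp v. v y)"
  proof (rule sum.cong)
    fix y assume "y \<in> supp v"
    hence yL: "y \<in> L" using sv by auto
    hence "g y \<in> L" using g Bij_bij_betw bij_betwE by blast
    thus "perm_lin L g v (g y) = v y"
      using yL Bij_bij_betw[OF g] by (simp add: perm_lin_def bij_betw_inv_into_left)
  qed simp
  also have "\<dots> = (\<Sum>x\<in>A. v x)" by (rule sum_supp_eq) (use fA in \<open>auto simp: A_def\<close>)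
  finally have "(\<Sum>x\<in>A. perm_lin L g v x) = (\<Sum>x\<in>A. v x)" .
  hence "(\<Sum>x\<in>A. ?w x) = 0" by (simp add: sum_subtractf)
  hence "(\<Sum>x\<in>supp ?w. ?w x) = 0" by (simp add: sum_supp_eq[OF fA sw])
  thus ?thesis using loop_alg_diff[OF loop_alg_perm_lin[OF g v] v] by (simp add: aug_ideal_def)
qed

lemma BijGroup_carrier: "carrier (BijGroup L) = Bij L"
  by (simp add: BijGroup_def)

lemma BijGroup_one: "\<one>\<^bsub>BijGroup L\<^esub> = (\<lambda>x\<in>L. x)"
  by (simp add: BijGroup_def)

lemma BijGroup_mult: "a \<in> Bij L \<Longrightarrow> b \<in> Bij L \<Longrightarrow> a \<otimes>\<^bsub>BijGroup L\<^esub> b = compose L a b"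
  by (simp add: BijGroup_def)

section \<open>The filtration of the loop algebra by iterated left differences\<close>

locale loop_setting =
  fixes L :: "'a set" and m :: "'a \<Rightarrow> 'a \<Rightarrow> 'a" and e :: 'a
  assumes loop: "is_loop L m e"
begin

definition lmult :: "'a \<Rightarrow> 'a \<Rightarrow> 'a" where
  "lmult a = restrict (\<lambda>x. m a x) L"

lemma lmult_Bij: "a \<in> L \<Longrightarrow> lmult a \<in> Bij L"
proof -
  assume a: "a \<in> L"
  have "bij_betw (\<lambda>x. m a x) L L" using loop a by (simp add: is_loop_def)
  hence "bij_betw (lmult a) L L"
    unfolding lmult_def by (rule bij_betw_cong[THEN iffD1, rotated]) simp
  thus ?thesis by (simp add: Bij_def lmult_def)
qed

lemma unit_in_L: "e \<in> L"
  using loop by (simp add: is_loop_def)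

lemma lmult_unit: "a \<in> L \<Longrightarrow> lmult a e = a"
  using loop unit_in_L by (simp add: lmult_def is_loop_def)

lemma lmult_unit_id: "lmult e = (\<lambda>x\<in>L. x)"
  using loop by (auto simp: lmult_def is_loop_def)

lemma sum_lmult_preimage:
  assumes a: "a \<in> L" and v: "v \<in> loop_alg L"
  shows "(\<Sum>y\<in>supp v. if m a y = z then c * v y else 0) = c * perm_lin L (lmult a) v z"
proof (cases "z \<in> L")
  case True
  have fv: "finite (supp v)" and sv: "supp v \<subseteq> L" using v by (auto simp: loop_alg_def)
  have bij: "bij_betw (lmult a) L L" using lmult_Bij[OF a] Bij_bij_betw by auto
  define y0 where "y0 = inv_into L (lmult a) z"
  have "(m a y = z) = (y = y0)" if y: "y \<in> L" for y
  proof -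
    have "m a y = lmult a y" using y by (simp add: lmult_def)
    thus ?thesis using y True bij unfolding y0_def
      by (metis bij_betw_inv_into_left bij_betw_inv_into_right)
  qed
  hence "(\<Sum>y\<in>supp v. if m a y = z then c * v y else 0) = (\<Sum>y\<in>supp v. if y = y0 then c * v y else 0)"
    using sv by (intro sum.cong) auto
  also have "\<dots> = c * v y0" using fv by (simp add: sum.delta supp_def)
  finally show ?thesis using True by (simp add: perm_lin_def y0_def)
next
  case False
  have "m a y \<noteq> z" if "y \<in> supp v" for y
    using that False v loop a by (auto simp: is_loop_def loop_alg_def)
  thus ?thesis using False by (simp add: perm_lin_def)
qed

lemma alg_mult_basis_diff:
  assumes a: "a \<in> L" and v: "v \<in> loop_alg L"
  shows "alg_mult m (\<lambda>x. basis a x - basis e x) v = (\<lambda>z. perm_lin L (lmult a) v z - v z)"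
proof (cases "a = e")
  case True
  thus ?thesis
    using v perm_lin_id[of v L] by (auto simp: alg_mult_def loop_alg_def supp_def lmult_unit_id)
next
  case False
  have supp_ae: "supp (\<lambda>x. basis a x - basis e x) = {a, e}"
    using False by (auto simp: supp_def basis_def)
  show ?thesis
  proof
    fix z
    have coeff: "basis a a - basis e a = 1" "basis a e - basis e e = -1"
      using False by (simp_all add: basis_def)
    have "alg_mult m (\<lambda>x. basis a x - basis e x) v z
        = (\<Sum>y\<in>supp v. if m a y = z then (basis a a - basis e a) * v y else 0)
          + (\<Sum>y\<in>supp v. if m e y = z then (basis a e - basis e e) * v y else 0)"
      using False unfolding alg_mult_def supp_ae by simp
    also have "\<dots> = perm_lin L (lmult a) v z - v z"
      using v perm_lin_id[of v L]
      unfolding coeff sum_lmult_preimage[OF a v] sum_lmult_preimage[OF unit_in_L v]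
      by (simp add: lmult_unit_id loop_alg_def)
    finally show "alg_mult m (\<lambda>x. basis a x - basis e x) v z = perm_lin L (lmult a) v z - v z" .
  qed
qed

inductive diff_iter :: "nat \<Rightarrow> ('a \<Rightarrow> rat) \<Rightarrow> bool" where
  base: "v \<in> loop_alg L \<Longrightarrow> diff_iter 0 v"
| step: "diff_iter k v \<Longrightarrow> a \<in> L \<Longrightarrow> diff_iter (Suc k) (\<lambda>z. perm_lin L (lmult a) v z - v z)"

inductive filt :: "nat \<Rightarrow> ('a \<Rightarrow> rat) \<Rightarrow> bool" where
  gen: "diff_iter j v \<Longrightarrow> k \<le> j \<Longrightarrow> filt k v"
| zero: "filt k (\<lambda>_. 0)"
| add: "filt k u \<Longrightarrow> filt k v \<Longrightarrow> filt k (\<lambda>x. u x + v x)"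
| smult: "filt k u \<Longrightarrow> filt k (\<lambda>x. c * u x)"

lemma diff_iter_loop_alg: "diff_iter k v \<Longrightarrow> v \<in> loop_alg L"
  by (induction rule: diff_iter.induct) (auto intro: loop_alg_diff loop_alg_perm_lin lmult_Bij)

lemma filt_loop_alg: "filt k v \<Longrightarrow> v \<in> loop_alg L"
  by (induction rule: filt.induct)
    (auto intro: diff_iter_loop_alg loop_alg_zero loop_alg_add loop_alg_smult)

lemma filt_supp: "filt k v \<Longrightarrow> supp v \<subseteq> L"
  using filt_loop_alg by (simp add: loop_alg_def)

lemma diff_iter_is_prod: "diff_iter k v \<Longrightarrow> 1 \<le> k \<Longrightarrow> is_prod L m k v"
proof (induction rule: diff_iter.induct)
  case (base v) thus ?case by simp
next
  case (step k v a)
  have v: "v \<in> loop_alg L" using step.hyps diff_iter_loop_alg by blast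
  show ?case
  proof (cases "k = 0")
    case True
    thus ?thesis using perm_lin_minus_id_aug_ideal[OF lmult_Bij[OF step.hyps(2)] v] is_prod.single
      by simp
  next
    case False
    have aug: "(\<lambda>x. basis a x - basis e x) \<in> aug_ideal L"
      using perm_lin_minus_id_aug_ideal[OF lmult_Bij[OF step.hyps(2)] loop_alg_basis[OF unit_in_L]]
      by (simp add: perm_lin_basis[OF lmult_Bij[OF step.hyps(2)] unit_in_L] lmult_unit[OF step.hyps(2)])
    have "is_prod L m k v" using step.IH False by simp
    hence "is_prod L m (1 + k) (alg_mult m (\<lambda>x. basis a x - basis e x) v)"
      using is_prod.mult[OF is_prod.single[OF aug]] by blast
    thus ?thesis using alg_mult_basis_diff[OF step.hyps(2) v] by simp
  qed
qed

lemma filt_in_aug_pow: "filt k u \<Longrightarrow> 1 \<le> k \<Longrightarrow> in_aug_pow L m k u"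
proof (induction rule: filt.induct)
  case (gen j v k)
  thus ?case using diff_iter_is_prod[OF gen(1)] in_aug_pow.gen by auto
qed (auto intro: in_aug_pow.intros)

lemma filt_mono: "filt k u \<Longrightarrow> j \<le> k \<Longrightarrow> filt j u"
  by (induction rule: filt.induct) (auto intro: filt.intros)

lemma filt_0: "u \<in> loop_alg L \<Longrightarrow> filt 0 u"
  using diff_iter.base filt.gen by blast

lemma filt_neg: "filt k u \<Longrightarrow> filt k (\<lambda>x. - u x)"
  using filt.smult[of k u "-1"] by simp

lemma filt_diff: "filt k u \<Longrightarrow> filt k v \<Longrightarrow> filt k (\<lambda>x. u x - v x)"
  using filt.add[of k u "\<lambda>x. - v x"] filt_neg by simp

lemma filt_lmult_diff: "filt k u \<Longrightarrow> a \<in> L \<Longrightarrow> filt (Suc k) (\<lambda>z. perm_lin L (lmult a) u z - u z)"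
proof (induction rule: filt.induct)
  case (gen j v k)
  thus ?case using diff_iter.step[OF gen(1) gen(3)] filt.gen[of "Suc j"] by auto
next
  case (zero k)
  thus ?case using filt.zero by (simp add: perm_lin_zero)
next
  case (add k u v)
  have "(\<lambda>z. perm_lin L (lmult a) (\<lambda>x. u x + v x) z - (u z + v z)) =
        (\<lambda>z. (perm_lin L (lmult a) u z - u z) + (perm_lin L (lmult a) v z - v z))"
    by (simp add: perm_lin_add algebra_simps)
  thus ?case using add filt.add by simp
next
  case (smult k u c)
  have "(\<lambda>z. perm_lin L (lmult a) (\<lambda>x. c * u x) z - c * u z) =
        (\<lambda>z. c * (perm_lin L (lmult a) u z - u z))"
    by (simp add: perm_lin_smult algebra_simps)
  thus ?case using smult filt.smult by simp
qed

definition filt_shift :: "nat \<Rightarrow> ('a \<Rightarrow> 'a) \<Rightarrow> bool" where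
  "filt_shift j g \<longleftrightarrow> (\<forall>k u. filt k u \<longrightarrow> filt (k + j) (\<lambda>z. perm_lin L g u z - u z))"

lemma filt_shiftD: "filt_shift j g \<Longrightarrow> filt k u \<Longrightarrow> filt (k + j) (\<lambda>z. perm_lin L g u z - u z)"
  by (simp add: filt_shift_def)

lemma filt_shift_lmult: "a \<in> L \<Longrightarrow> filt_shift 1 (lmult a)"
  using filt_lmult_diff by (simp add: filt_shift_def)

lemma filt_shift_preserves: "filt_shift j g \<Longrightarrow> filt k u \<Longrightarrow> filt k (perm_lin L g u)"
proof -
  assume g: "filt_shift j g" and u: "filt k u"
  have "filt k (\<lambda>z. perm_lin L g u z - u z)" using filt_shiftD[OF g u] filt_mono by simp
  hence "filt k (\<lambda>z. u z + (perm_lin L g u z - u z))" using u filt.add by blast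
  thus ?thesis by simp
qed

lemma filt_shift_reflects:
  assumes g: "filt_shift j g" and j: "1 \<le> j" and v: "v \<in> loop_alg L"
    and gv: "filt k (perm_lin L g v)"
  shows "filt k v"
proof -
  have "filt i v" if "i \<le> k" for i
    using that
  proof (induction i)
    case 0 thus ?case using filt_0 v by simp
  next
    case (Suc i)
    hence "filt (Suc i) (\<lambda>z. perm_lin L g v z - v z)"
      using filt_shiftD[OF g] j filt_mono by (metis Suc_leD add_le_cancel_left Suc_eq_plus1)
    moreover have "filt (Suc i) (perm_lin L g v)" using gv Suc.prems filt_mono by blast
    ultimately have "filt (Suc i) (\<lambda>z. perm_lin L g v z - (perm_lin L g v z - v z))"
      using filt_diff by blast
    thus ?case by simp
  qed
  thus ?thesis by simp
qed

lemma filt_shift_id: "filt_shift j (\<lambda>x\<in>L. x)"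
  by (auto simp: filt_shift_def perm_lin_id[OF filt_supp] filt.zero)

lemma filt_shift_compose:
  assumes g: "g \<in> Bij L" and h: "h \<in> Bij L" and sg: "filt_shift j g" and sh: "filt_shift j h"
  shows "filt_shift j (compose L g h)"
  unfolding filt_shift_def
proof (intro allI impI)
  fix k u assume u: "filt k u"
  have "filt (k + j) (\<lambda>z. (perm_lin L g (perm_lin L h u) z - perm_lin L h u z)
                        + (perm_lin L h u z - u z))"
    using filt_shiftD[OF sg filt_shift_preserves[OF sh u]] filt_shiftD[OF sh u] by (rule filt.add)
  thus "filt (k + j) (\<lambda>z. perm_lin L (compose L g h) u z - u z)"
    by (simp add: perm_lin_compose[OF g h])
qed

lemma filt_shift_inv:
  assumes g: "g \<in> Bij L" and sg: "filt_shift j g" and j: "1 \<le> j"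
  shows "filt_shift j (\<lambda>x\<in>L. inv_into L g x)"
  unfolding filt_shift_def
proof (intro allI impI)
  fix k u assume u: "filt k u"
  let ?v = "perm_lin L (\<lambda>x\<in>L. inv_into L g x) u"
  have v: "?v \<in> loop_alg L"
    using loop_alg_perm_lin[OF restrict_inv_into_Bij[OF g] filt_loop_alg[OF u]] .
  have gv: "perm_lin L g ?v = u" using perm_lin_inv_right[OF g filt_supp[OF u]] .
  have "filt k ?v" using filt_shift_reflects[OF sg j v] gv u by simp
  hence "filt (k + j) (\<lambda>z. - (u z - ?v z))" using filt_shiftD[OF sg] gv filt_neg by fastforce
  thus "filt (k + j) (\<lambda>z. ?v z - u z)" by simp
qed

text \<open>With \<open>w = x\<inverse> y\<inverse> u\<close>, the commutator moves \<open>u = y x w\<close> to \<open>x y w\<close>, and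
  \<open>x y w - y x w = (x - 1)(y - 1) w - (y - 1)(x - 1) w\<close>.\<close>
lemma filt_shift_commutator:
  assumes x: "x \<in> Bij L" and y: "y \<in> Bij L" and sx: "filt_shift i x" and sy: "filt_shift j y"
    and i: "1 \<le> i" and j: "1 \<le> j"
  shows "filt_shift (i + j)
           (compose L (compose L (compose L x y) (\<lambda>z\<in>L. inv_into L x z)) (\<lambda>z\<in>L. inv_into L y z))"
  unfolding filt_shift_def
proof (intro allI impI)
  fix k u assume u: "filt k u"
  let ?xi = "\<lambda>z\<in>L. inv_into L x z" and ?yi = "\<lambda>z\<in>L. inv_into L y z"
  have xi: "?xi \<in> Bij L" and yi: "?yi \<in> Bij L" using x y restrict_inv_into_Bij by auto
  let ?w = "perm_lin L ?xi (perm_lin L ?yi u)"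
  have w: "filt k ?w"
    using filt_shift_preserves[OF filt_shift_inv[OF x sx i]
                                  filt_shift_preserves[OF filt_shift_inv[OF y sy j] u]] .
  have "supp (perm_lin L ?yi u) \<subseteq> L"
    using loop_alg_perm_lin[OF yi filt_loop_alg[OF u]] by (simp add: loop_alg_def)
  hence yxw: "perm_lin L y (perm_lin L x ?w) = u"
    using perm_lin_inv_right[OF x] perm_lin_inv_right[OF y filt_supp[OF u]] by simp
  have cu: "perm_lin L (compose L (compose L (compose L x y) ?xi) ?yi) u = perm_lin L x (perm_lin L y ?w)"
    using x y xi yi by (simp add: perm_lin_compose compose_Bij)
  let ?Yw = "\<lambda>z. perm_lin L y ?w z - ?w z" and ?Xw = "\<lambda>z. perm_lin L x ?w z - ?w z"
  have deg: "k + j + i = k + (i + j)" "k + i + j = k + (i + j)" by simp_all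
  have "filt (k + (i + j)) (\<lambda>z. perm_lin L x ?Yw z - ?Yw z)"
    using filt_shiftD[OF sx filt_shiftD[OF sy w]] unfolding deg .
  moreover have "filt (k + (i + j)) (\<lambda>z. perm_lin L y ?Xw z - ?Xw z)"
    using filt_shiftD[OF sy filt_shiftD[OF sx w]] unfolding deg .
  ultimately have "filt (k + (i + j)) (\<lambda>z. (perm_lin L x ?Yw z - ?Yw z) - (perm_lin L y ?Xw z - ?Xw z))"
    by (rule filt_diff)
  thus "filt (k + (i + j)) (\<lambda>z. perm_lin L (compose L (compose L (compose L x y) ?xi) ?yi) u z - u z)"
    using cu yxw by (simp add: perm_lin_diff)
qed

lemma filt_shift_conj:
  assumes g: "g \<in> Bij L" and h: "h \<in> Bij L" and sg: "filt_shift j g" and sh: "filt_shift 1 h"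
  shows "filt_shift j (compose L (\<lambda>x\<in>L. inv_into L h x) (compose L g h))"
  unfolding filt_shift_def
proof (intro allI impI)
  fix k u assume u: "filt k u"
  let ?hi = "\<lambda>x\<in>L. inv_into L h x"
  have hi: "?hi \<in> Bij L" using h restrict_inv_into_Bij by auto
  have "filt (k + j) (\<lambda>z. perm_lin L g (perm_lin L h u) z - perm_lin L h u z)"
    using filt_shiftD[OF sg filt_shift_preserves[OF sh u]] .
  hence "filt (k + j) (perm_lin L ?hi (\<lambda>z. perm_lin L g (perm_lin L h u) z - perm_lin L h u z))"
    using filt_shift_preserves[OF filt_shift_inv[OF h sh]] by simp
  thus "filt (k + j) (\<lambda>z. perm_lin L (compose L ?hi (compose L g h)) u z - u z)"
    using perm_lin_inv_left[OF h filt_supp[OF u]]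
    by (simp add: perm_lin_diff perm_lin_compose[OF hi compose_Bij[OF g h]] perm_lin_compose[OF g h])
qed

lemma generate_filt_shift:
  assumes S: "S \<subseteq> Bij L" and sS: "\<forall>s\<in>S. filt_shift j s" and j: "1 \<le> j"
    and g: "g \<in> generate (BijGroup L) S"
  shows "g \<in> Bij L \<and> filt_shift j g"
  using g
proof (induction rule: generate.induct)
  case one show ?case unfolding BijGroup_one using id_Bij filt_shift_id by blast
next
  case (incl h) thus ?case using S sS by auto
next
  case (inv h)
  hence h: "h \<in> Bij L" "filt_shift j h" using S sS by auto
  show ?case
    unfolding inv_BijGroup[OF h(1)] using restrict_inv_into_Bij[OF h(1)] filt_shift_inv[OF h j] by blast
next
  case (eng h1 h2) thus ?case by (simp add: BijGroup_mult compose_Bij filt_shift_compose)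
qed

abbreviation H :: "('a \<Rightarrow> 'a) set" where
  "H \<equiv> LMlt_carrier L m"

lemma LMlt_generators: "{restrict (\<lambda>x. m a x) L | a. a \<in> L} \<subseteq> Bij L"
  using lmult_Bij unfolding lmult_def by auto

lemma LMlt_carrier_filt_shift: "g \<in> H \<Longrightarrow> g \<in> Bij L \<and> filt_shift 1 g"
  using generate_filt_shift[OF LMlt_generators] filt_shift_lmult
  unfolding LMlt_carrier_def lmult_def by blast

lemma subgroup_LMlt_carrier: "subgroup H (BijGroup L)"
  unfolding LMlt_carrier_def
  using LMlt_generators by (simp add: group.generate_is_subgroup[OF group_BijGroup] BijGroup_carrier)

lemma group_LMlt: "group (LMlt L m)"
  unfolding LMlt_def using group.subgroup_imp_group[OF group_BijGroup subgroup_LMlt_carrier] .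

lemma LMlt_carrier_eq: "carrier (LMlt L m) = H"
  by (simp add: LMlt_def)

lemma LMlt_mult: "a \<in> H \<Longrightarrow> b \<in> H \<Longrightarrow> a \<otimes>\<^bsub>LMlt L m\<^esub> b = compose L a b"
  using LMlt_carrier_filt_shift by (simp add: LMlt_def BijGroup_mult)

lemma LMlt_one: "\<one>\<^bsub>LMlt L m\<^esub> = (\<lambda>x\<in>L. x)"
  by (simp add: LMlt_def BijGroup_one)

lemma LMlt_inv: "a \<in> H \<Longrightarrow> inv\<^bsub>LMlt L m\<^esub> a = (\<lambda>x\<in>L. inv_into L a x)"
  using group.m_inv_consistent[OF group_BijGroup subgroup_LMlt_carrier]
    inv_BijGroup[OF conjunct1[OF LMlt_carrier_filt_shift]]
  by (simp add: LMlt_def)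

lemma LMlt_commutator_filt_shift:
  assumes x: "x \<in> H" and y: "y \<in> H" and sy: "filt_shift (Suc j) y"
  shows "filt_shift (Suc (Suc j))
           (x \<otimes>\<^bsub>LMlt L m\<^esub> y \<otimes>\<^bsub>LMlt L m\<^esub> inv\<^bsub>LMlt L m\<^esub> x \<otimes>\<^bsub>LMlt L m\<^esub> inv\<^bsub>LMlt L m\<^esub> y)"
proof -
  have xB: "x \<in> Bij L" and sx: "filt_shift 1 x" and yB: "y \<in> Bij L"
    using LMlt_carrier_filt_shift x y by auto
  have H: "x \<otimes>\<^bsub>LMlt L m\<^esub> y \<in> H" "inv\<^bsub>LMlt L m\<^esub> x \<in> H" "inv\<^bsub>LMlt L m\<^esub> y \<in> H"
    "x \<otimes>\<^bsub>LMlt L m\<^esub> y \<otimes>\<^bsub>LMlt L m\<^esub> inv\<^bsub>LMlt L m\<^esub> x \<in> H"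
    using x y group_LMlt LMlt_carrier_eq by (metis group.inv_closed group.subgroup_self subgroup.m_closed)+
  show ?thesis
    using filt_shift_commutator[OF xB yB sx sy] H x y
    by (simp add: LMlt_mult LMlt_inv)
qed

lemma lower_central_filt_shift:
  "g \<in> lower_central (LMlt L m) (Suc j) \<Longrightarrow> g \<in> H \<and> filt_shift (Suc j) g"
proof (induction j arbitrary: g)
  case 0 thus ?case using LMlt_carrier_filt_shift by (simp add: LMlt_carrier_eq)
next
  case (Suc j)
  define C where "C = {x \<otimes>\<^bsub>LMlt L m\<^esub> y \<otimes>\<^bsub>LMlt L m\<^esub> inv\<^bsub>LMlt L m\<^esub> x \<otimes>\<^bsub>LMlt L m\<^esub> inv\<^bsub>LMlt L m\<^esub> y
                       | x y. x \<in> carrier (LMlt L m) \<and> y \<in> lower_central (LMlt L m) (Suc j)}"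
  have g: "g \<in> generate (LMlt L m) C" using Suc.prems by (simp add: C_def)
  have CH: "C \<subseteq> H"
    unfolding C_def LMlt_carrier_eq[symmetric] using Suc.IH group_LMlt LMlt_carrier_eq
    by (auto intro!: monoid.m_closed group.is_monoid group.inv_closed)
  have sC: "\<forall>c\<in>C. filt_shift (Suc (Suc j)) c"
    unfolding C_def LMlt_carrier_eq using Suc.IH LMlt_commutator_filt_shift by blast
  have "generate (LMlt L m) C = generate (BijGroup L) C"
    unfolding LMlt_def using group.generate_consistent[OF group_BijGroup CH subgroup_LMlt_carrier] .
  moreover have "C \<subseteq> Bij L" using CH LMlt_carrier_filt_shift by blast
  ultimately have "filt_shift (Suc (Suc j)) g"
    using generate_filt_shift[OF _ sC] g by simp
  moreover have "g \<in> H" using group.generate_incl[OF group_LMlt] CH LMlt_carrier_eq g by blast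
  ultimately show ?case by simp
qed

lemma one_in_lower_central: "\<one>\<^bsub>LMlt L m\<^esub> \<in> lower_central (LMlt L m) (Suc j)"
proof (cases j)
  case 0 thus ?thesis using group_LMlt by (simp add: group.is_monoid monoid.one_closed)
next
  case (Suc k) thus ?thesis by (simp add: generate.one)
qed

lemma filt_shift_fixes:
  assumes D: "dim_subloop L m e (Suc n) = {e}"
    and gB: "g \<in> Bij L" and sg: "filt_shift (Suc n) g" and x: "x \<in> L"
  shows "g x = x"
proof -
  let ?h = "lmult x"
  let ?c = "compose L (\<lambda>y\<in>L. inv_into L ?h y) (compose L g ?h)"
  have hB: "?h \<in> Bij L" using lmult_Bij[OF x] .
  have cB: "?c \<in> Bij L" using compose_Bij[OF restrict_inv_into_Bij[OF hB] compose_Bij[OF gB hB]] .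
  have "filt (Suc n) (\<lambda>z. perm_lin L ?c (basis e) z - basis e z)"
    using filt_shiftD[OF filt_shift_conj[OF gB hB sg filt_shift_lmult[OF x]]
                         filt_0[OF loop_alg_basis[OF unit_in_L]]] by simp
  hence "in_aug_pow L m (Suc n) (\<lambda>z. basis (?c e) z - basis e z)"
    using filt_in_aug_pow unfolding perm_lin_basis[OF cB unit_in_L] by simp
  moreover have "?c e \<in> L" using funcset_mem[OF Bij_imp_funcset[OF cB] unit_in_L] .
  ultimately have "?c e \<in> dim_subloop L m e (Suc n)"
    unfolding dim_subloop_def aug_pow_def by simp
  hence ce: "?c e = e" using D by simp
  have gx: "g x \<in> L" using funcset_mem[OF Bij_imp_funcset[OF gB] x] .
  have "?c e = inv_into L ?h (g x)"
    using unit_in_L gx lmult_unit[OF x] by (simp add: compose_def)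
  hence "?h e = ?h (inv_into L ?h (g x))" using ce by simp
  thus "g x = x"
    using lmult_unit[OF x] bij_betw_inv_into_right[OF Bij_bij_betw[OF hB] gx] by simp
qed

lemma nilpotent_class_le_LMlt:
  assumes D: "dim_subloop L m e (Suc n) = {e}"
  shows "nilpotent_class_le (LMlt L m) n"
  unfolding nilpotent_class_le_def
proof (intro conjI group_LMlt equalityI subsetI)
  fix g assume "g \<in> lower_central (LMlt L m) (Suc n)"
  hence gB: "g \<in> Bij L" and sg: "filt_shift (Suc n) g"
    using lower_central_filt_shift LMlt_carrier_filt_shift by blast+
  have "g = (\<lambda>x\<in>L. x)"
    using filt_shift_fixes[OF D gB sg] extensional_arb[OF Bij_imp_extensional[OF gB]]
    by (intro ext) (simp add: restrict_def)
  thus "g \<in> {\<one>\<^bsub>LMlt L m\<^esub>}" by (simp add: LMlt_one)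
qed (use one_in_lower_central in simp)

end

theorem theorem3p1:
  fixes L :: "'a set" and m :: "'a \<Rightarrow> 'a \<Rightarrow> 'a" and e :: 'a and n :: nat
  assumes "is_loop L m e"
    and "torsion_free_nilpotent_class L m e n"
  shows "nilpotent_class_le (LMlt L m) n"
proof -
  interpret loop_setting L m e using assms(1) by unfold_locales
  show ?thesis
    using nilpotent_class_le_LMlt assms(2) by (simp add: torsion_free_nilpotent_class_def)
qed

end
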